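(* If $A\subseteq\mathbb{R}$ is homogeneous, then $A$ is not order-isomorphic to its complement $\mathbb{R}\setminus A$. Equivalently, if $A\subseteq \mathbb{R}$ is order-isomorphic to $\mathbb{R}\setminus A$, then there is an open interval $I$ such that $A\not\cong A\cap I$.
   Context: A suborder $A\subseteq\mathbb{R}$ is homogeneous if $A\cong A\cap I$ (order-isomorphism) for every open interval $I=(a,b)$ with $-\infty\le a<b\le\infty$. *)

theory Defs
  imports Complex_Main "HOL-Library.Extended_Real"
begin

definition order_iso :: "real set \<Rightarrow> real set \<Rightarrow> bool" where
  "order_iso A B \<longleftrightarrow>
     (\<exists>f. bij_betw f A B \<and> (\<forall>x\<in>A. \<forall>y\<in>A. x < y \<longleftrightarrow> f x < f y))"

definition open_ival :: "ereal \<Rightarrow> ereal \<Rightarrow> real set" where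
  "open_ival a b = {x. a < ereal x \<and> ereal x < b}"

definition homogeneous :: "real set \<Rightarrow> bool" where
  "homogeneous A \<longleftrightarrow> (\<forall>a b. a < b \<longrightarrow> order_iso A (A \<inter> open_ival a b))"

end

theory Submission
  imports Defs
begin

text \<open>Suppose f is an order isomorphism from A onto its complement B. Homogeneity makes A
  dense and unbounded, and it identifies each of the three pieces into which two points
  y1 < y2 of B cut B with the corresponding piece of A cut at any a1 < a2. Gluing the
  pieces gives an order isomorphism T from B onto A with T y1 < y1 and y2 < T y2. Between this
  downward and this upward displacement a supremum argument finds a cut s respected by T
  on both sides. Such an s lies neither in A (its T-preimage would have to lie on both
  sides of s) nor in B (by density some value of T lies strictly between s and T s, and its
  preimage would have to lie on the wrong side of s).\<close>

definition order_isomorphism :: "('a::linorder \<Rightarrow> 'b::linorder) \<Rightarrow> 'a set \<Rightarrow> 'b set \<Rightarrow> bool" where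
  "order_isomorphism f X Y \<longleftrightarrow> bij_betw f X Y \<and> strict_mono_on X f"

lemma order_iso_iff_order_isomorphism: "order_iso X Y \<longleftrightarrow> (\<exists>f. order_isomorphism f X Y)"
proof -
  have "(\<forall>x\<in>X. \<forall>y\<in>X. x < y \<longleftrightarrow> f x < f y) \<longleftrightarrow> strict_mono_on X f" for f :: "real \<Rightarrow> real"
    by (auto simp: strict_mono_on_less intro: strict_mono_onI)
  then show ?thesis
    by (simp add: order_iso_def order_isomorphism_def)
qed

lemma order_isomorphism_inv_into:
  assumes "order_isomorphism f X Y"
  shows "order_isomorphism (inv_into X f) Y X"
proof -
  have f: "bij_betw f X Y" "strict_mono_on X f"
    using assms by (auto simp: order_isomorphism_def)
  have "strict_mono_on Y (inv_into X f)"
  proof (rule strict_mono_onI)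
    fix y y' assume "y \<in> Y" "y' \<in> Y" "y < y'"
    moreover have "inv_into X f y \<in> X" "inv_into X f y' \<in> X"
      using \<open>y \<in> Y\<close> \<open>y' \<in> Y\<close> bij_betw_apply[OF bij_betw_inv_into[OF f(1)]] by auto
    ultimately show "inv_into X f y < inv_into X f y'"
      by (simp add: strict_mono_on_less[OF f(2), symmetric] bij_betw_inv_into_right[OF f(1)])
  qed
  then show ?thesis
    using f by (simp add: order_isomorphism_def bij_betw_inv_into)
qed

lemma order_isomorphism_comp:
  assumes "order_isomorphism f X Y" "order_isomorphism g Y Z"
  shows "order_isomorphism (g \<circ> f) X Z"
proof -
  have "f ` X = Y"
    using assms by (simp add: order_isomorphism_def bij_betw_def)
  then show ?thesis
    using assms unfolding order_isomorphism_def by (auto intro: bij_betw_trans monotone_on_o)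
qed

lemma order_iso_sym: "order_iso X Y \<Longrightarrow> order_iso Y X"
  using order_iso_iff_order_isomorphism order_isomorphism_inv_into by blast

lemma order_iso_trans: "order_iso X Y \<Longrightarrow> order_iso Y Z \<Longrightarrow> order_iso X Z"
  using order_iso_iff_order_isomorphism order_isomorphism_comp by blast

lemma order_iso_nonempty: "order_iso X Y \<Longrightarrow> X \<noteq> {} \<Longrightarrow> Y \<noteq> {}"
  unfolding order_iso_def bij_betw_def by auto

lemma order_iso_restrict:
  assumes f: "order_isomorphism f X Y" and IJ: "\<And>x. x \<in> X \<Longrightarrow> x \<in> I \<longleftrightarrow> f x \<in> J"
  shows "order_iso (X \<inter> I) (Y \<inter> J)"
proof -
  have "f ` (X \<inter> I) = Y \<inter> J"
    using f IJ unfolding order_isomorphism_def bij_betw_def by auto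
  moreover have "inj_on f (X \<inter> I)" "strict_mono_on (X \<inter> I) f"
    using f unfolding order_isomorphism_def bij_betw_def
    by (auto intro: inj_on_subset monotone_on_subset)
  ultimately show ?thesis
    unfolding order_iso_iff_order_isomorphism order_isomorphism_def bij_betw_def by blast
qed

lemma order_iso_restrict_lessThan:
  "order_isomorphism f X Y \<Longrightarrow> u \<in> X \<Longrightarrow> order_iso (X \<inter> {..<u}) (Y \<inter> {..<f u})"
  by (rule order_iso_restrict) (auto simp: order_isomorphism_def strict_mono_on_less)

lemma order_iso_restrict_greaterThan:
  "order_isomorphism f X Y \<Longrightarrow> u \<in> X \<Longrightarrow> order_iso (X \<inter> {u<..}) (Y \<inter> {f u<..})"
  by (rule order_iso_restrict) (auto simp: order_isomorphism_def strict_mono_on_less)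

lemma order_iso_restrict_greaterThanLessThan:
  "order_isomorphism f X Y \<Longrightarrow> u \<in> X \<Longrightarrow> v \<in> X \<Longrightarrow> order_iso (X \<inter> {u<..<v}) (Y \<inter> {f u<..<f v})"
  by (rule order_iso_restrict) (auto simp: order_isomorphism_def strict_mono_on_less)

lemma open_ival_real [simp]:
  "open_ival (-\<infinity>) (ereal t) = {..<t}"
  "open_ival (ereal t) \<infinity> = {t<..}"
  "open_ival (ereal s) (ereal t) = {s<..<t}"
  by (auto simp: open_ival_def)

lemma homogeneous_order_iso_lessThan: "homogeneous A \<Longrightarrow> order_iso A (A \<inter> {..<t})"
  unfolding homogeneous_def by (drule spec[of _ "-\<infinity>"], drule spec[of _ "ereal t"]) simp

lemma homogeneous_order_iso_greaterThan: "homogeneous A \<Longrightarrow> order_iso A (A \<inter> {t<..})"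
  unfolding homogeneous_def by (drule spec[of _ "ereal t"], drule spec[of _ "\<infinity>"]) simp

lemma homogeneous_order_iso_greaterThanLessThan:
  "homogeneous A \<Longrightarrow> s < t \<Longrightarrow> order_iso A (A \<inter> {s<..<t})"
  unfolding homogeneous_def by (drule spec[of _ "ereal s"], drule spec[of _ "ereal t"]) simp

lemma homogeneous_dense:
  assumes "homogeneous A" "A \<noteq> {}" "s < t"
  shows "\<exists>a\<in>A. s < a \<and> a < t"
  using order_iso_nonempty[OF homogeneous_order_iso_greaterThanLessThan[OF assms(1,3)] assms(2)]
  by auto

lemma homogeneous_unbounded:
  assumes "homogeneous A" "A \<noteq> {}"
  shows "\<exists>a\<in>A. a < t" "\<exists>a\<in>A. t < a"
  using order_iso_nonempty[OF homogeneous_order_iso_lessThan[OF assms(1)] assms(2)]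
    order_iso_nonempty[OF homogeneous_order_iso_greaterThan[OF assms(1)] assms(2)]
  by auto

lemma order_isomorphism_glue:
  fixes p :: "'a::linorder" and q :: "'b::linorder"
  assumes p: "p \<in> X" and q: "q \<in> Y"
    and g: "order_isomorphism g (X \<inter> {..<p}) (Y \<inter> {..<q})"
    and h: "order_isomorphism h (X \<inter> {p<..}) (Y \<inter> {q<..})"
  shows "order_isomorphism (\<lambda>x. if x < p then g x else if x = p then q else h x) X Y"
    (is "order_isomorphism ?T X Y")
proof -
  have g_bij: "bij_betw g (X \<inter> {..<p}) (Y \<inter> {..<q})" and g_mono: "strict_mono_on (X \<inter> {..<p}) g"
    and h_bij: "bij_betw h (X \<inter> {p<..}) (Y \<inter> {q<..})" and h_mono: "strict_mono_on (X \<inter> {p<..}) h"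
    using g h by (auto simp: order_isomorphism_def)
  have below: "g x \<in> Y \<and> g x < q" if "x \<in> X" "x < p" for x
    using that bij_betw_apply[OF g_bij] by auto
  have above: "h x \<in> Y \<and> q < h x" if "x \<in> X" "p < x" for x
    using that bij_betw_apply[OF h_bij] by auto
  have mono: "strict_mono_on X ?T"
  proof (rule strict_mono_onI)
    fix x z assume xz: "x \<in> X" "z \<in> X" "x < z"
    consider "z < p" | "p < x" | "x \<le> p" "p \<le> z" by fastforce
    then show "?T x < ?T z"
    proof cases
      case 1
      then show ?thesis using xz strict_mono_onD[OF g_mono] by auto
    next
      case 2
      then show ?thesis using xz strict_mono_onD[OF h_mono] by auto
    next
      case 3
      then have "?T x \<le> q" "q \<le> ?T z" "?T x < q \<or> q < ?T z"
        using xz below above by (auto simp: le_less)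
      then show ?thesis by (meson le_less_trans less_le_trans)
    qed
  qed
  have "Y \<subseteq> ?T ` X"
  proof
    fix y assume y: "y \<in> Y"
    consider "y < q" | "y = q" | "q < y"
      by fastforce
    then show "y \<in> ?T ` X"
    proof cases
      case 1
      then have "y \<in> g ` (X \<inter> {..<p})"
        using y bij_betw_imp_surj_on[OF g_bij] by auto
      then obtain x where "x \<in> X" "x < p" "y = g x"
        by auto
      then show ?thesis
        by (intro image_eqI[of _ _ x]) auto
    next
      case 2
      then show ?thesis
        using p by (intro image_eqI[of _ _ p]) auto
    next
      case 3
      then have "y \<in> h ` (X \<inter> {p<..})"
        using y bij_betw_imp_surj_on[OF h_bij] by auto
      then obtain x where "x \<in> X" "p < x" "y = h x"
        by auto
      then show ?thesis
        by (intro image_eqI[of _ _ x]) auto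
    qed
  qed
  moreover have "?T ` X \<subseteq> Y"
    using below above q by (auto simp: not_less_iff_gr_or_eq)
  ultimately show ?thesis
    using mono strict_mono_on_imp_inj_on by (auto simp: order_isomorphism_def bij_betw_def)
qed

lemma homogeneous_order_isomorphism_two_points:
  fixes A B :: "real set"
  assumes hom: "homogeneous A" and BA: "order_iso B A"
    and y: "y1 \<in> B" "y2 \<in> B" "y1 < y2" and a: "a1 \<in> A" "a2 \<in> A" "a1 < a2"
  obtains T where "order_isomorphism T B A" "T y1 = a1" "T y2 = a2"
proof -
  obtain f where f: "order_isomorphism f B A"
    using BA order_iso_iff_order_isomorphism by blast
  have via_A: "order_iso P Q" if "order_iso P P'" "order_iso A P'" "order_iso A Q" for P P' Q
    using that order_iso_sym order_iso_trans by blast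
  have "f y1 < f y2"
    using f y by (auto simp: order_isomorphism_def dest: strict_mono_onD)
  have "order_iso (B \<inter> {..<y1}) (A \<inter> {..<a1})"
    by (rule via_A[OF order_iso_restrict_lessThan[OF f y(1)]
          homogeneous_order_iso_lessThan[OF hom] homogeneous_order_iso_lessThan[OF hom]])
  then obtain g1 where g1: "order_isomorphism g1 (B \<inter> {..<y1}) (A \<inter> {..<a1})"
    using order_iso_iff_order_isomorphism by blast
  have "order_iso (B \<inter> {y1<..<y2}) (A \<inter> {a1<..<a2})"
    by (rule via_A[OF order_iso_restrict_greaterThanLessThan[OF f y(1,2)]
          homogeneous_order_iso_greaterThanLessThan[OF hom \<open>f y1 < f y2\<close>]
          homogeneous_order_iso_greaterThanLessThan[OF hom a(3)]])
  moreover have "B \<inter> {y1<..<y2} = B \<inter> {y1<..} \<inter> {..<y2}" "A \<inter> {a1<..<a2} = A \<inter> {a1<..} \<inter> {..<a2}"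
    by auto
  ultimately obtain g2 where g2: "order_isomorphism g2 (B \<inter> {y1<..} \<inter> {..<y2}) (A \<inter> {a1<..} \<inter> {..<a2})"
    using order_iso_iff_order_isomorphism by auto
  have "order_iso (B \<inter> {y2<..}) (A \<inter> {a2<..})"
    by (rule via_A[OF order_iso_restrict_greaterThan[OF f y(2)]
          homogeneous_order_iso_greaterThan[OF hom] homogeneous_order_iso_greaterThan[OF hom]])
  moreover have "B \<inter> {y2<..} = B \<inter> {y1<..} \<inter> {y2<..}" "A \<inter> {a2<..} = A \<inter> {a1<..} \<inter> {a2<..}"
    using y(3) a(3) by auto
  ultimately obtain g3 where g3: "order_isomorphism g3 (B \<inter> {y1<..} \<inter> {y2<..}) (A \<inter> {a1<..} \<inter> {a2<..})"
    using order_iso_iff_order_isomorphism by auto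
  define h where "h x = (if x < y2 then g2 x else if x = y2 then a2 else g3 x)" for x
  have h: "order_isomorphism h (B \<inter> {y1<..}) (A \<inter> {a1<..})"
    unfolding h_def by (rule order_isomorphism_glue) (use y a g2 g3 in auto)
  define T where "T x = (if x < y1 then g1 x else if x = y1 then a1 else h x)" for x
  have "order_isomorphism T B A"
    unfolding T_def by (rule order_isomorphism_glue) (use y a g1 h in auto)
  moreover have "T y1 = a1" "T y2 = a2"
    using y(3) by (simp_all add: T_def h_def)
  ultimately show thesis ..
qed

lemma mono_on_invariant_cut:
  fixes T :: "'a::conditionally_complete_linorder \<Rightarrow> 'a"
  assumes mono: "mono_on B T" and x: "x1 \<in> B" "x2 \<in> B" "x1 < x2"
    and down: "T x1 < x1" and up: "x2 < T x2"
  obtains s where "\<forall>x\<in>B. x < s \<longrightarrow> T x < s" "\<forall>x\<in>B. s < x \<longrightarrow> s < T x"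
proof
  define S where "S = {x\<in>B. x1 \<le> x \<and> x \<le> x2 \<and> T x < x}"
  have "x1 \<in> S"
    using x down by (simp add: S_def)
  have "bdd_above S"
    by (auto simp: S_def bdd_above_def)
  then have upper: "x \<in> S \<Longrightarrow> x \<le> Sup S" and approx: "w < Sup S \<longleftrightarrow> (\<exists>z\<in>S. w < z)" for x w
    using less_cSup_iff[of S w] \<open>x1 \<in> S\<close> by (auto intro: cSup_upper)
  have "x1 \<le> Sup S"
    using upper \<open>x1 \<in> S\<close> .
  have "Sup S \<le> x2"
    using \<open>x1 \<in> S\<close> by (intro cSup_least) (auto simp: S_def)
  show "\<forall>x\<in>B. x < Sup S \<longrightarrow> T x < Sup S"
  proof (intro ballI impI)
    fix x assume "x \<in> B" "x < Sup S"
    then obtain z where "z \<in> S" "x < z"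
      using approx by blast
    then have "T x \<le> T z" "T z < z" "z \<le> Sup S"
      using \<open>x \<in> B\<close> mono upper by (auto simp: S_def dest: mono_onD)
    then show "T x < Sup S" by simp
  qed
  show "\<forall>x\<in>B. Sup S < x \<longrightarrow> Sup S < T x"
  proof (intro ballI impI)
    fix x assume x_B: "x \<in> B" and "Sup S < x"
    show "Sup S < T x"
    proof (cases "x \<le> x2")
      case True
      then have "x \<notin> S"
        using \<open>Sup S < x\<close> upper by fastforce
      then show ?thesis
        using True x_B \<open>x1 \<le> Sup S\<close> \<open>Sup S < x\<close> by (auto simp: S_def)
    next
      case False
      then have "T x2 \<le> T x"
        using x x_B mono by (auto dest: mono_onD)
      then show ?thesis
        using up \<open>Sup S \<le> x2\<close> by simp
    qed
  qed
qed

lemma order_isomorphism_complement_no_invariant_cut: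
  fixes Y :: "'a::linorder set"
  assumes T: "order_isomorphism T (UNIV - Y) Y"
    and dense: "\<And>p q. p < q \<Longrightarrow> \<exists>y\<in>Y. p < y \<and> y < q"
    and below: "\<forall>x\<in>UNIV - Y. x < s \<longrightarrow> T x < s"
    and above: "\<forall>x\<in>UNIV - Y. s < x \<longrightarrow> s < T x"
  shows False
proof -
  have image: "T ` (UNIV - Y) = Y" and mono: "strict_mono_on (UNIV - Y) T"
    using T by (auto simp: order_isomorphism_def bij_betw_def)
  have into: "x \<notin> Y \<Longrightarrow> T x \<in> Y" for x
    using image by blast
  have onto: "y \<in> Y \<Longrightarrow> \<exists>x. x \<notin> Y \<and> T x = y" for y
    using image by (metis DiffD2 imageE)
  have less: "x \<notin> Y \<Longrightarrow> z \<notin> Y \<Longrightarrow> T x < T z \<longleftrightarrow> x < z" for x z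
    using strict_mono_on_less[OF mono] by simp
  show False
  proof (cases "s \<in> Y")
    case True
    then obtain w where "w \<notin> Y" "T w = s"
      using onto by blast
    then show False
      using True below above by (metis DiffI UNIV_I less_irrefl linorder_neqE)
  next
    case False
    then have "T s \<noteq> s"
      using into by force
    then consider "T s < s" | "s < T s"
      by fastforce
    then show False
    proof cases
      case 1
      then obtain x where "x \<notin> Y" "T s < T x" "T x < s"
        using dense onto by metis
      then show False
        using False above less by (meson DiffI UNIV_I order.asym)
    next
      case 2
      then obtain x where "x \<notin> Y" "s < T x" "T x < T s"
        using dense onto by metis
      then show False
        using False below less by (meson DiffI UNIV_I order.asym)
    qed
  qed
qed

theorem mainTheorem12:
  fixes A :: "real set"
  assumes "homogeneous A"
  shows "\<not> order_iso A (UNIV - A)"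
proof
  assume iso: "order_iso A (UNIV - A)"
  then obtain f where f: "order_isomorphism f A (UNIV - A)"
    using order_iso_iff_order_isomorphism by blast
  have "A \<noteq> {}"
    using order_iso_nonempty[OF order_iso_sym[OF iso]] by blast
  then obtain u1 u2 where u: "u1 \<in> A" "u2 \<in> A" "u1 < u2"
    using homogeneous_unbounded[OF assms] by blast
  define y1 y2 where "y1 = f u1" and "y2 = f u2"
  have "f ` A = UNIV - A" "strict_mono_on A f"
    using f by (auto simp: order_isomorphism_def bij_betw_def)
  then have y: "y1 \<in> UNIV - A" "y2 \<in> UNIV - A" "y1 < y2"
    using u unfolding y1_def y2_def by (blast, blast, blast dest: strict_mono_onD)
  obtain a1 a2 where a: "a1 \<in> A" "a2 \<in> A" "a1 < y1" "y2 < a2"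
    using homogeneous_unbounded[OF assms \<open>A \<noteq> {}\<close>] by metis
  have "a1 < a2"
    using a y(3) by linarith
  then obtain T where T: "order_isomorphism T (UNIV - A) A" "T y1 = a1" "T y2 = a2"
    using homogeneous_order_isomorphism_two_points[OF assms order_iso_sym[OF iso] y a(1,2)] by blast
  obtain s where "\<forall>x\<in>UNIV - A. x < s \<longrightarrow> T x < s" "\<forall>x\<in>UNIV - A. s < x \<longrightarrow> s < T x"
    using mono_on_invariant_cut[of "UNIV - A" T y1 y2] T y a
    by (auto simp: order_isomorphism_def strict_mono_on_imp_mono_on)
  then show False
    using order_isomorphism_complement_no_invariant_cut[OF T(1)] homogeneous_dense[OF assms \<open>A \<noteq> {}\<close>]
    by blast
qed

end
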